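(* Let $(R,\mathfrak{m},k)$ be a commutative Noetherian local ring and let $n$ be a positive integer. Let $x_1,\dots,x_n,y\in\mathfrak{m}$ be elements such that the ideal $(x_1,x_2,\dots,x_n,y)$ has minimal number of generators $n+1$. Let $p,q\in R$ satisfy $(x_1+py,x_2,\dots,x_n)=(x_1+qy,x_2,\dots,x_n)$ as ideals of $R$. Then $\overline p=\overline q$ in $k=R/\mathfrak{m}$. *)

theory Defs
  imports Main
begin

definition is_ideal :: "'a::comm_ring_1 set \<Rightarrow> bool" where
  "is_ideal I \<longleftrightarrow> 0 \<in> I \<and> (\<forall>x\<in>I. \<forall>y\<in>I. x + y \<in> I) \<and> (\<forall>r. \<forall>x\<in>I. r * x \<in> I)"

definition ideal_gen :: "'a::comm_ring_1 set \<Rightarrow> 'a set" where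
  "ideal_gen S = \<Inter>{I. is_ideal I \<and> S \<subseteq> I}"

definition noetherian_ring :: "'a::comm_ring_1 itself \<Rightarrow> bool" where
  "noetherian_ring _ \<longleftrightarrow> (\<forall>I::'a set. is_ideal I \<longrightarrow> (\<exists>G. finite G \<and> I = ideal_gen G))"

definition maximal_ideal :: "'a::comm_ring_1 set \<Rightarrow> bool" where
  "maximal_ideal m \<longleftrightarrow> is_ideal m \<and> m \<noteq> UNIV \<and>
     (\<forall>I. is_ideal I \<and> m \<subseteq> I \<longrightarrow> I = m \<or> I = UNIV)"

definition local_ring :: "'a::comm_ring_1 set \<Rightarrow> bool" where
  "local_ring m \<longleftrightarrow> maximal_ideal m \<and> (\<forall>I. maximal_ideal I \<longrightarrow> I = m)"

definition min_gens :: "'a::comm_ring_1 set \<Rightarrow> nat" where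
  "min_gens I = (LEAST n. \<exists>G. finite G \<and> card G = n \<and> ideal_gen G = I)"

end

theory Submission
  imports Defs
begin

text \<open>If \<open>p - q\<close> were a unit, subtracting the two generators \<open>x\<^sub>1 + p y\<close> and \<open>x\<^sub>1 + q y\<close> would
  put \<open>y\<close>, and then \<open>x\<^sub>1\<close>, into the ideal \<open>(x\<^sub>1 + q y, x\<^sub>2, \<dots>, x\<^sub>n)\<close>. That ideal would then equal
  \<open>(x\<^sub>1, \<dots>, x\<^sub>n, y)\<close> while having only \<open>n\<close> generators. In a local ring the non-units are
  exactly the elements of the maximal ideal, so \<open>p - q \<in> m\<close>.\<close>

lemma is_ideal_ideal_gen: "is_ideal (ideal_gen S)"
  unfolding ideal_gen_def is_ideal_def by auto

lemma ideal_gen_superset: "S \<subseteq> ideal_gen S"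
  unfolding ideal_gen_def by auto

lemma mem_ideal_gen: "a \<in> S \<Longrightarrow> a \<in> ideal_gen S"
  using ideal_gen_superset by blast

lemma ideal_gen_minimal: "is_ideal I \<Longrightarrow> S \<subseteq> I \<Longrightarrow> ideal_gen S \<subseteq> I"
  unfolding ideal_gen_def by auto

lemma ideal_gen_eqI: "A \<subseteq> ideal_gen B \<Longrightarrow> B \<subseteq> ideal_gen A \<Longrightarrow> ideal_gen A = ideal_gen B"
  using ideal_gen_minimal is_ideal_ideal_gen by (metis subset_antisym)

lemma ideal_add: "is_ideal I \<Longrightarrow> a \<in> I \<Longrightarrow> b \<in> I \<Longrightarrow> a + b \<in> I"
  unfolding is_ideal_def by auto

lemma ideal_mult: "is_ideal I \<Longrightarrow> a \<in> I \<Longrightarrow> r * a \<in> I"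
  unfolding is_ideal_def by auto

lemma ideal_diff: "is_ideal I \<Longrightarrow> a \<in> I \<Longrightarrow> b \<in> I \<Longrightarrow> a - b \<in> I"
  using ideal_add[of I a "(-1) * b"] ideal_mult[of I b "-1"] by simp

lemma ideal_eq_UNIV_iff_one: "is_ideal I \<Longrightarrow> I = UNIV \<longleftrightarrow> 1 \<in> I"
  using ideal_mult[of I 1] by auto

lemma is_ideal_multiples: "is_ideal {r * u | r. True}"
  unfolding is_ideal_def
  by (auto intro: exI[of _ 0]) (metis distrib_right, metis mult.assoc)

lemma is_ideal_Union_chain:
  assumes "C \<noteq> {}" "\<forall>I\<in>C. is_ideal I" "\<forall>I\<in>C. \<forall>J\<in>C. I \<subseteq> J \<or> J \<subseteq> I"
  shows "is_ideal (\<Union>C)"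
  unfolding is_ideal_def
proof (intro conjI ballI allI)
  show "0 \<in> \<Union>C" using assms(1,2) unfolding is_ideal_def by auto
next
  fix a b assume "a \<in> \<Union>C" "b \<in> \<Union>C"
  then obtain I J where "I \<in> C" "J \<in> C" "a \<in> I" "b \<in> J" by auto
  with assms(2,3) show "a + b \<in> \<Union>C"
    by (metis UnionI ideal_add subset_iff)
next
  fix r a assume "a \<in> \<Union>C"
  with assms(2) show "r * a \<in> \<Union>C" by (auto intro: ideal_mult)
qed

lemma proper_ideal_le_maximal_ideal:
  assumes "is_ideal I" "1 \<notin> I"
  obtains M where "maximal_ideal M" "I \<subseteq> M"
proof -
  define A where "A = {J. is_ideal J \<and> I \<subseteq> J \<and> 1 \<notin> J}"
  have "\<exists>M\<in>A. \<forall>J\<in>A. M \<subseteq> J \<longrightarrow> J = M"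
  proof (rule subset_Zorn_nonempty)
    show "A \<noteq> {}" using assms unfolding A_def by auto
  next
    fix C assume "C \<noteq> {}" "subset.chain A C"
    then have "C \<subseteq> A" "\<forall>J\<in>C. \<forall>K\<in>C. J \<subseteq> K \<or> K \<subseteq> J" "C \<noteq> {}"
      unfolding subset.chain_def by auto
    with is_ideal_Union_chain[of C] show "\<Union>C \<in> A" unfolding A_def by auto
  qed
  then obtain M where M: "M \<in> A" and M_max: "\<forall>J\<in>A. M \<subseteq> J \<longrightarrow> J = M" by auto
  have "maximal_ideal M"
    unfolding maximal_ideal_def
  proof (intro conjI allI impI)
    show "is_ideal M" "M \<noteq> UNIV" using M unfolding A_def by auto
    fix J assume "is_ideal J \<and> M \<subseteq> J"
    with M M_max ideal_eq_UNIV_iff_one[of J] show "J = M \<or> J = UNIV"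
      unfolding A_def by blast
  qed
  with M show ?thesis using that unfolding A_def by auto
qed

lemma local_ring_not_in_imp_unit:
  assumes "local_ring m" "u \<notin> m"
  shows "u dvd 1"
proof (rule ccontr)
  assume "\<not> u dvd 1"
  then have "1 \<notin> {r * u | r. True}" by (auto simp: dvd_def mult.commute)
  then obtain M where "maximal_ideal M" "{r * u | r. True} \<subseteq> M"
    using proper_ideal_le_maximal_ideal is_ideal_multiples by blast
  moreover have "u \<in> {r * u | r. True}" by (auto intro: exI[of _ 1])
  ultimately show False using assms unfolding local_ring_def by auto
qed

lemma min_gens_le_card: "finite G \<Longrightarrow> min_gens (ideal_gen G) \<le> card G"
  unfolding min_gens_def by (rule Least_le) auto

lemma mem_ideal_gen_if_unit_shift:
  assumes "ideal_gen (insert (a + p * y) S) = ideal_gen (insert (a + q * y) S)"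
    and "(p - q) dvd 1"
  shows "y \<in> ideal_gen (insert (a + q * y) S)"
proof -
  let ?J = "ideal_gen (insert (a + q * y) S)"
  have "a + p * y \<in> ?J" unfolding assms(1)[symmetric] by (simp add: mem_ideal_gen)
  moreover have "a + q * y \<in> ?J" by (simp add: mem_ideal_gen)
  ultimately have "(a + p * y) - (a + q * y) \<in> ?J"
    by (rule ideal_diff[OF is_ideal_ideal_gen])
  then have "(p - q) * y \<in> ?J" by (simp add: algebra_simps)
  moreover obtain v where "1 = (p - q) * v" using assms(2) by (auto simp: dvd_def)
  then have "v * ((p - q) * y) = y" by (simp add: mult.assoc[symmetric] mult.commute[of v])
  ultimately show ?thesis using ideal_mult[OF is_ideal_ideal_gen, of "(p - q) * y" _ v] by simp
qed

lemma ideal_gen_insert_shift: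
  assumes "y \<in> ideal_gen (insert (a + q * y) S)"
  shows "ideal_gen (insert (a + q * y) S) = ideal_gen (insert a (insert y S))"
proof (rule ideal_gen_eqI)
  let ?J = "ideal_gen (insert (a + q * y) S)"
  have "a + q * y \<in> ?J" by (simp add: mem_ideal_gen)
  then have "(a + q * y) - q * y \<in> ?J"
    using assms by (intro ideal_diff ideal_mult is_ideal_ideal_gen)
  then show "insert a (insert y S) \<subseteq> ?J"
    using assms ideal_gen_superset[of "insert (a + q * y) S"] by auto
  let ?I = "ideal_gen (insert a (insert y S))"
  have "a \<in> ?I" "y \<in> ?I" by (simp_all add: mem_ideal_gen)
  then have "a + q * y \<in> ?I" by (intro ideal_add ideal_mult is_ideal_ideal_gen)
  then show "insert (a + q * y) S \<subseteq> ?I"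
    using ideal_gen_superset[of "insert a (insert y S)"] by auto
qed

theorem lemma3p7:
  fixes m :: "'a::comm_ring_1 set" and x :: "nat \<Rightarrow> 'a" and y p q :: 'a and n :: nat
  assumes "noetherian_ring TYPE('a)"
    and "local_ring m"
    and "n \<ge> 1"
    and "\<forall>i\<in>{1..n}. x i \<in> m"
    and "y \<in> m"
    and "min_gens (ideal_gen (x ` {1..n} \<union> {y})) = n + 1"
    and "ideal_gen (insert (x 1 + p * y) (x ` {2..n}))
         = ideal_gen (insert (x 1 + q * y) (x ` {2..n}))"
  shows "p - q \<in> m"
proof (rule ccontr)
  let ?G = "insert (x 1 + q * y) (x ` {2..n})"
  assume "p - q \<notin> m"
  then have "(p - q) dvd 1" using assms(2) local_ring_not_in_imp_unit by blast
  with assms(7) have "y \<in> ideal_gen ?G" by (rule mem_ideal_gen_if_unit_shift)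
  then have "ideal_gen ?G = ideal_gen (insert (x 1) (insert y (x ` {2..n})))"
    by (rule ideal_gen_insert_shift)
  also have "insert (x 1) (insert y (x ` {2..n})) = x ` {1..n} \<union> {y}"
  proof -
    have "{1..n} = insert 1 {2..n}" using assms(3) by auto
    then show ?thesis by (simp add: insert_commute)
  qed
  finally have "n + 1 \<le> card ?G"
    using assms(6) min_gens_le_card[of ?G] by simp
  also have "\<dots> \<le> Suc (card (x ` {2..n}))" by (rule card_insert_le_m1) auto
  also have "\<dots> \<le> Suc (card {2..n})" using card_image_le[of "{2..n}" x] by simp
  finally show False using assms(3) by simp
qed

end
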